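(* Let $K\subseteq\mathbb{C}$ be a number field of class number $1$ stable under complex conjugation, with ring of integers $\mathcal{O}_K$, and let $K_0:=K\cap\mathbb{R}$, $\mathcal{O}_{K_0}:=K_0\cap\mathcal{O}_K$. Suppose $a,b\in\mathcal{O}_{K_0}$ satisfy $a\mid b$ and $a=\alpha\overline{\alpha}$, $b=\beta\overline{\beta}$ for some $\alpha,\beta\in\mathcal{O}_K$. Then there exists $\alpha_1\in\mathcal{O}_K$ dividing $\beta$ such that $\alpha_1\overline{\alpha_1}=\alpha\overline{\alpha}$. In particular $b/a=\gamma\overline{\gamma}$ with $\gamma=\beta/\alpha_1\in\mathcal{O}_K$. *)

theory Defs
  imports Complex_Main "HOL-Computational_Algebra.Polynomial"
begin

definition subfield_of_complex :: "complex set \<Rightarrow> bool" where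
  "subfield_of_complex K \<longleftrightarrow> 0 \<in> K \<and> 1 \<in> K \<and>
     (\<forall>x\<in>K. \<forall>y\<in>K. x + y \<in> K \<and> x - y \<in> K \<and> x * y \<in> K) \<and>
     (\<forall>x\<in>K. x \<noteq> 0 \<longrightarrow> inverse x \<in> K)"

definition number_field :: "complex set \<Rightarrow> bool" where
  "number_field K \<longleftrightarrow> subfield_of_complex K \<and>
     (\<exists>B. finite B \<and> B \<subseteq> K \<and>
        (\<forall>x\<in>K. \<exists>c :: complex \<Rightarrow> rat. x = (\<Sum>b\<in>B. of_rat (c b) * b)))"

definition ring_of_integers :: "complex set \<Rightarrow> complex set" where
  "ring_of_integers K = {x \<in> K. algebraic_int x}"

definition dvd_in :: "complex set \<Rightarrow> complex \<Rightarrow> complex \<Rightarrow> bool" where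
  "dvd_in R x y \<longleftrightarrow> (\<exists>c\<in>R. y = x * c)"

definition ideal_in :: "complex set \<Rightarrow> complex set \<Rightarrow> bool" where
  "ideal_in R I \<longleftrightarrow> I \<subseteq> R \<and> 0 \<in> I \<and>
     (\<forall>x\<in>I. \<forall>y\<in>I. x + y \<in> I) \<and> (\<forall>r\<in>R. \<forall>x\<in>I. r * x \<in> I)"

definition class_number_one :: "complex set \<Rightarrow> bool" where
  "class_number_one K \<longleftrightarrow>
     (\<forall>I. ideal_in (ring_of_integers K) I \<longrightarrow>
        (\<exists>g\<in>ring_of_integers K. I = {g * r | r. r \<in> ring_of_integers K}))"

end

theory Submission imports Defs "Jordan_Normal_Form.Char_Poly" begin

text \<open>Since \<open>\<O>\<^sub>K\<close> is a principal ideal domain, write \<open>\<alpha> = g r\<^sub>1\<close> and \<open>\<beta> = g r\<^sub>2\<close> with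
  \<open>x r\<^sub>1 + y r\<^sub>2 = 1\<close>. Cancelling \<open>g cnj g\<close> in \<open>\<alpha> cnj \<alpha> | \<beta> cnj \<beta>\<close> gives
  \<open>r\<^sub>1 | r\<^sub>2 cnj r\<^sub>2\<close>, and coprimality of \<open>r\<^sub>1\<close> and \<open>r\<^sub>2\<close> yields \<open>r\<^sub>1 | cnj r\<^sub>2\<close>.
  Hence \<open>\<alpha>\<^sub>1 = g cnj r\<^sub>1\<close> divides \<open>\<beta> = g r\<^sub>2\<close> and has the same norm as \<open>\<alpha>\<close>.
  That \<open>\<O>\<^sub>K\<close> is closed under sums and products follows from the criterion that
  \<open>x\<close> is an algebraic integer as soon as multiplication by \<open>x\<close> preserves a nonzero finitely
  generated \<open>\<int>\<close>-submodule of \<open>\<complex>\<close>, since \<open>x\<close> is then an eigenvalue of an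
  integer matrix.\<close>

definition int_span :: "complex set \<Rightarrow> complex set" where
  "int_span G = {(\<Sum>g\<in>G. of_int (c g) * g) | c. True}"

lemma int_span_iff: "a \<in> int_span G \<longleftrightarrow> (\<exists>c. a = (\<Sum>g\<in>G. of_int (c g) * g))"
  unfolding int_span_def by auto

lemma int_span_add:
  assumes "a \<in> int_span G" "b \<in> int_span G"
  shows "a + b \<in> int_span G"
proof -
  obtain c d where "a = (\<Sum>g\<in>G. of_int (c g) * g)" "b = (\<Sum>g\<in>G. of_int (d g) * g)"
    using assms unfolding int_span_iff by blast
  then have "a + b = (\<Sum>g\<in>G. of_int (c g + d g) * g)"
    by (simp add: sum.distrib distrib_right)
  then show ?thesis unfolding int_span_iff by (rule exI[of _ "\<lambda>g. c g + d g"])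
qed

lemma int_span_of_int_mult:
  assumes "a \<in> int_span G"
  shows "of_int k * a \<in> int_span G"
proof -
  obtain c where "a = (\<Sum>g\<in>G. of_int (c g) * g)" using assms unfolding int_span_iff by blast
  then have "of_int k * a = (\<Sum>g\<in>G. of_int (k * c g) * g)"
    by (simp add: sum_distrib_left mult.assoc)
  then show ?thesis unfolding int_span_iff by (rule exI[of _ "\<lambda>g. k * c g"])
qed

lemma int_span_uminus: "a \<in> int_span G \<Longrightarrow> - a \<in> int_span G"
  using int_span_of_int_mult[of a G "-1"] by simp

lemma int_span_base:
  assumes "finite G" "g \<in> G"
  shows "g \<in> int_span G"
proof -
  have "(\<Sum>h\<in>G. of_int (if h = g then 1 else 0) * h) = (\<Sum>h\<in>G. if h = g then h else 0)"
    by (rule sum.cong) auto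
  also have "\<dots> = g" using assms by (simp add: sum.delta)
  finally show ?thesis unfolding int_span_iff by metis
qed

lemma int_span_sum:
  assumes "finite I" "\<And>i. i \<in> I \<Longrightarrow> f i \<in> int_span G"
  shows "sum f I \<in> int_span G"
  using assms
proof (induction I rule: finite_induct)
  case empty
  show ?case unfolding int_span_iff by (rule exI[of _ "\<lambda>_. 0"]) simp
qed (auto intro: int_span_add)

lemma int_span_mult:
  assumes "finite A" "finite B" "a \<in> int_span A" "b \<in> int_span B"
    and "\<And>u v. u \<in> A \<Longrightarrow> v \<in> B \<Longrightarrow> u * v \<in> int_span C"
  shows "a * b \<in> int_span C"
proof -
  obtain c where a: "a = (\<Sum>u\<in>A. of_int (c u) * u)" using assms(3) unfolding int_span_iff by auto
  obtain d where b: "b = (\<Sum>v\<in>B. of_int (d v) * v)" using assms(4) unfolding int_span_iff by auto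
  have "a * b = (\<Sum>u\<in>A. \<Sum>v\<in>B. of_int (c u * d v) * (u * v))"
    unfolding a b sum_product by (auto intro!: sum.cong simp: algebra_simps)
  also have "\<dots> \<in> int_span C"
    using assms by (intro int_span_sum int_span_of_int_mult) auto
  finally show ?thesis .
qed

lemma int_span_mult_closed:
  assumes "finite G" "\<And>g. g \<in> G \<Longrightarrow> x * g \<in> int_span G" "a \<in> int_span G"
  shows "x * a \<in> int_span G"
proof -
  obtain c where a: "a = (\<Sum>g\<in>G. of_int (c g) * g)" using assms(3) unfolding int_span_iff by auto
  have "x * a = (\<Sum>g\<in>G. of_int (c g) * (x * g))"
    unfolding a by (simp add: sum_distrib_left algebra_simps)
  also have "\<dots> \<in> int_span G" using assms by (auto intro!: int_span_sum int_span_of_int_mult)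
  finally show ?thesis .
qed

lemma algebraic_int_if_integer_eigenvector:
  fixes x :: complex and v :: "nat \<Rightarrow> complex" and c :: "nat \<Rightarrow> nat \<Rightarrow> int"
  assumes "\<exists>i<n. v i \<noteq> 0"
    and "\<And>i. i < n \<Longrightarrow> x * v i = (\<Sum>j<n. of_int (c i j) * v j)"
  shows "algebraic_int x"
proof -
  define C :: "int mat" where "C = mat n n (\<lambda>(i, j). c i j)"
  define A :: "complex mat" where "A = map_mat of_int C"
  define w :: "complex vec" where "w = vec n v"
  have C: "C \<in> carrier_mat n n" and A: "A \<in> carrier_mat n n"
    unfolding A_def C_def by auto
  have "A *\<^sub>v w = x \<cdot>\<^sub>v w"
  proof (rule eq_vecI)
    fix i assume "i < dim_vec (x \<cdot>\<^sub>v w)"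
    then have i: "i < n" by (simp add: w_def)
    have "(A *\<^sub>v w) $ i = (\<Sum>j<n. of_int (c i j) * v j)"
      using i unfolding A_def C_def w_def
      by (auto simp: mult_mat_vec_def scalar_prod_def lessThan_atLeast0 intro!: sum.cong)
    then show "(A *\<^sub>v w) $ i = (x \<cdot>\<^sub>v w) $ i" using i assms(2) by (simp add: w_def)
  qed (use A w_def in auto)
  moreover have "w \<noteq> 0\<^sub>v n" using assms(1) unfolding w_def by (metis index_vec index_zero_vec(1))
  ultimately have "eigenvector A w x" using A unfolding eigenvector_def w_def by auto
  then have "eigenvalue A x" unfolding eigenvalue_def by blast
  then have "poly (char_poly A) x = 0" using eigenvalue_root_char_poly[OF A] by simp
  moreover have "char_poly A = map_poly of_int (char_poly C)"
    unfolding A_def by (rule of_int_hom.char_poly_hom[OF C])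
  moreover have "lead_coeff (char_poly C) = 1" using degree_monic_char_poly[OF C] by simp
  ultimately show ?thesis unfolding algebraic_int_altdef_ipoly by auto
qed

lemma algebraic_int_if_int_span_stable:
  assumes "finite G" "1 \<in> int_span G" "\<And>g. g \<in> G \<Longrightarrow> x * g \<in> int_span G"
  shows "algebraic_int x"
proof -
  obtain v where v: "bij_betw v {0..<card G} G" using ex_bij_betw_nat_finite[OF assms(1)] by blast
  have reindex: "(\<Sum>g\<in>G. f g) = (\<Sum>j<card G. f (v j))" for f :: "complex \<Rightarrow> complex"
    using sum.reindex_bij_betw[OF v, of f] by (simp add: atLeast0LessThan)
  have "\<exists>g\<in>G. g \<noteq> 0"
  proof (rule ccontr)
    assume "\<not> (\<exists>g\<in>G. g \<noteq> 0)"
    then have "(\<Sum>g\<in>G. of_int (c g) * g) = 0" for c by (intro sum.neutral) auto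
    then show False using assms(2) unfolding int_span_iff by (metis zero_neq_one)
  qed
  then have nonzero: "\<exists>i<card G. v i \<noteq> 0"
    using v unfolding bij_betw_def by (metis atLeastLessThan_iff imageE)
  have "\<forall>i. \<exists>c. i < card G \<longrightarrow> x * v i = (\<Sum>g\<in>G. of_int (c g) * g)"
    using assms(3) bij_betwE[OF v] unfolding int_span_iff by (meson atLeastLessThan_iff zero_le)
  then obtain c where c: "\<And>i. i < card G \<Longrightarrow> x * v i = (\<Sum>g\<in>G. of_int (c i g) * g)"
    by metis
  show ?thesis
    by (rule algebraic_int_if_integer_eigenvector[of "card G" v x "\<lambda>i j. c i (v j)"])
       (use nonzero c reindex in auto)
qed

lemma power_in_int_span_lower_powers:
  fixes y :: complex and p :: "int poly"
  assumes root: "poly (map_poly of_int p) y = 0" and monic: "lead_coeff p = 1"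
  shows "y ^ k \<in> int_span ((\<lambda>i. y ^ i) ` {..<degree p})"
proof -
  define n where "n = degree p"
  define G where "G = (\<lambda>i. y ^ i) ` {..<n}"
  have fin: "finite G" unfolding G_def by auto
  have "0 = (\<Sum>i\<le>n. of_int (coeff p i) * y ^ i)"
    using root by (simp add: poly_altdef n_def coeff_map_poly degree_map_poly)
  also have "\<dots> = (\<Sum>i<n. of_int (coeff p i) * y ^ i) + y ^ n"
    using monic by (simp add: n_def lessThan_Suc_atMost[symmetric])
  finally have "y ^ n = - (\<Sum>i<n. of_int (coeff p i) * y ^ i)"
    by (simp add: eq_neg_iff_add_eq_0 add.commute)
  moreover have "(\<Sum>i<n. of_int (coeff p i) * y ^ i) \<in> int_span G"
    by (intro int_span_sum int_span_of_int_mult int_span_base[OF fin]) (auto simp: G_def)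
  ultimately have top: "y ^ n \<in> int_span G" by (simp add: int_span_uminus)
  have stable: "y * g \<in> int_span G" if "g \<in> G" for g
  proof -
    from that obtain i where i: "i < n" "g = y ^ i" unfolding G_def by auto
    show ?thesis
    proof (cases "Suc i < n")
      case True
      with i have "y * g \<in> G" unfolding G_def by (metis power_Suc image_eqI lessThan_iff)
      then show ?thesis by (rule int_span_base[OF fin])
    next
      case False
      with i(1) have "n = Suc i" by simp
      then show ?thesis using i(2) top by simp
    qed
  qed
  have "n > 0"
  proof (rule ccontr)
    assume "\<not> n > 0"
    then have "p = [:1:]" using monic degree_0_id[of p] unfolding n_def by simp
    then show False using root by simp
  qed
  then have "y ^ 0 \<in> int_span G" using int_span_base[OF fin] unfolding G_def by blast
  then have "y ^ k \<in> int_span G"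
    by (induction k) (auto intro: int_span_mult_closed[OF fin stable])
  then show ?thesis unfolding G_def n_def .
qed

lemma algebraic_ints_common_int_span:
  fixes y z :: complex
  assumes "algebraic_int y" "algebraic_int z"
  obtains G where "finite G" "1 \<in> int_span G"
    "\<And>g. g \<in> G \<Longrightarrow> y * g \<in> int_span G" "\<And>g. g \<in> G \<Longrightarrow> z * g \<in> int_span G"
proof -
  obtain p where p: "poly (map_poly of_int p) y = 0" "lead_coeff p = 1"
    using assms(1) unfolding algebraic_int_altdef_ipoly by blast
  obtain q where q: "poly (map_poly of_int q) z = 0" "lead_coeff q = 1"
    using assms(2) unfolding algebraic_int_altdef_ipoly by blast
  define Gy where "Gy = (\<lambda>i. y ^ i) ` {..<degree p}"
  define Gz where "Gz = (\<lambda>j. z ^ j) ` {..<degree q}"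
  define G where "G = (\<lambda>(u, v). u * v) ` (Gy \<times> Gz)"
  have fin: "finite Gy" "finite Gz" "finite G" unfolding G_def Gy_def Gz_def by auto
  have monomial: "y ^ i * z ^ j \<in> int_span G" for i j
  proof (rule int_span_mult[OF fin(1,2)])
    show "y ^ i \<in> int_span Gy" unfolding Gy_def by (rule power_in_int_span_lower_powers[OF p])
    show "z ^ j \<in> int_span Gz" unfolding Gz_def by (rule power_in_int_span_lower_powers[OF q])
    show "u * v \<in> int_span G" if "u \<in> Gy" "v \<in> Gz" for u v
      using that by (intro int_span_base[OF fin(3)]) (force simp: G_def)
  qed
  have G: "g \<in> G \<Longrightarrow> \<exists>i j. g = y ^ i * z ^ j" for g
    unfolding G_def Gy_def Gz_def by auto
  show ?thesis
  proof (rule that[OF fin(3)])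
    show "1 \<in> int_span G" using monomial[of 0 0] by simp
    show "y * g \<in> int_span G" if "g \<in> G" for g
      using G[OF that] monomial by (metis mult.assoc power_Suc)
    show "z * g \<in> int_span G" if "g \<in> G" for g
      using G[OF that] monomial by (metis mult.left_commute power_Suc)
  qed
qed

lemma algebraic_int_add:
  fixes y z :: complex
  assumes "algebraic_int y" "algebraic_int z"
  shows "algebraic_int (y + z)"
proof -
  obtain G where G: "finite G" "1 \<in> int_span G"
    "\<And>g. g \<in> G \<Longrightarrow> y * g \<in> int_span G" "\<And>g. g \<in> G \<Longrightarrow> z * g \<in> int_span G"
    using algebraic_ints_common_int_span[OF assms] by blast
  show ?thesis
    using G by (intro algebraic_int_if_int_span_stable[of G]) (auto simp: distrib_right int_span_add)
qed

lemma algebraic_int_mult: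
  fixes y z :: complex
  assumes "algebraic_int y" "algebraic_int z"
  shows "algebraic_int (y * z)"
proof -
  obtain G where G: "finite G" "1 \<in> int_span G"
    "\<And>g. g \<in> G \<Longrightarrow> y * g \<in> int_span G" "\<And>g. g \<in> G \<Longrightarrow> z * g \<in> int_span G"
    using algebraic_ints_common_int_span[OF assms] by blast
  show ?thesis
    using G by (intro algebraic_int_if_int_span_stable[of G])
      (auto simp: mult.assoc intro: int_span_mult_closed[of G y])
qed

lemma
  assumes "subfield_of_complex K" "x \<in> ring_of_integers K" "y \<in> ring_of_integers K"
  shows ring_of_integers_add: "x + y \<in> ring_of_integers K"
    and ring_of_integers_mult: "x * y \<in> ring_of_integers K"
  using assms algebraic_int_add algebraic_int_mult
  unfolding ring_of_integers_def subfield_of_complex_def by auto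

lemma ring_of_integers_cnj:
  "cnj ` K \<subseteq> K \<Longrightarrow> x \<in> ring_of_integers K \<Longrightarrow> cnj x \<in> ring_of_integers K"
  unfolding ring_of_integers_def by auto

lemma
  assumes "subfield_of_complex K"
  shows ring_of_integers_0: "0 \<in> ring_of_integers K"
    and ring_of_integers_1: "1 \<in> ring_of_integers K"
  using assms unfolding subfield_of_complex_def ring_of_integers_def by auto

lemma class_number_one_bezout:
  assumes K: "subfield_of_complex K" "class_number_one K"
    and "\<alpha> \<in> ring_of_integers K" "\<beta> \<in> ring_of_integers K"
  obtains g x y where "g \<in> ring_of_integers K" "x \<in> ring_of_integers K" "y \<in> ring_of_integers K"
    "g = x * \<alpha> + y * \<beta>" "dvd_in (ring_of_integers K) g \<alpha>" "dvd_in (ring_of_integers K) g \<beta>"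
proof -
  let ?R = "ring_of_integers K"
  note add = ring_of_integers_add[OF K(1)] and mult = ring_of_integers_mult[OF K(1)]
  define I where "I = {x * \<alpha> + y * \<beta> | x y. x \<in> ?R \<and> y \<in> ?R}"
  have "ideal_in ?R I" unfolding ideal_in_def
  proof (intro conjI ballI)
    show "I \<subseteq> ?R" unfolding I_def using assms add mult by auto
    show "0 \<in> I" unfolding I_def using ring_of_integers_0[OF K(1)] by force
  next
    fix u v assume "u \<in> I" "v \<in> I"
    then obtain x1 y1 x2 y2 where "u = x1 * \<alpha> + y1 * \<beta>" "v = x2 * \<alpha> + y2 * \<beta>"
      "x1 \<in> ?R" "y1 \<in> ?R" "x2 \<in> ?R" "y2 \<in> ?R" unfolding I_def by auto
    then have "u + v = (x1 + x2) * \<alpha> + (y1 + y2) * \<beta>" "x1 + x2 \<in> ?R" "y1 + y2 \<in> ?R"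
      using add by (auto simp: algebra_simps)
    then show "u + v \<in> I" unfolding I_def by blast
  next
    fix r u assume "r \<in> ?R" "u \<in> I"
    then obtain x y where "u = x * \<alpha> + y * \<beta>" "x \<in> ?R" "y \<in> ?R" unfolding I_def by auto
    then have "r * u = (r * x) * \<alpha> + (r * y) * \<beta>" "r * x \<in> ?R" "r * y \<in> ?R"
      using mult \<open>r \<in> ?R\<close> by (auto simp: algebra_simps)
    then show "r * u \<in> I" unfolding I_def by blast
  qed
  then obtain g where g: "g \<in> ?R" "I = {g * r | r. r \<in> ?R}"
    using K(2) unfolding class_number_one_def by blast
  have "g \<in> I" using g ring_of_integers_1[OF K(1)] by force
  have "\<alpha> \<in> I" "\<beta> \<in> I"
    unfolding I_def using ring_of_integers_0[OF K(1)] ring_of_integers_1[OF K(1)] by force+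
  moreover obtain x y where "x \<in> ?R" "y \<in> ?R" "g = x * \<alpha> + y * \<beta>"
    using \<open>g \<in> I\<close> unfolding I_def by blast
  moreover have "dvd_in ?R g \<alpha>" "dvd_in ?R g \<beta>"
    using \<open>\<alpha> \<in> I\<close> \<open>\<beta> \<in> I\<close> g(2) unfolding dvd_in_def by auto
  ultimately show ?thesis
    using that g(1) by blast
qed

lemma dvd_in_of_bezout:
  assumes add: "\<And>u v. u \<in> R \<Longrightarrow> v \<in> R \<Longrightarrow> u + v \<in> R"
    and mult: "\<And>u v. u \<in> R \<Longrightarrow> v \<in> R \<Longrightarrow> u * v \<in> R"
    and "x \<in> R" "y \<in> R" "t \<in> R" "x * r + y * s = 1" "dvd_in R r (s * t)"
  shows "dvd_in R r t"
proof -
  obtain d where d: "d \<in> R" "s * t = r * d" using assms(7) unfolding dvd_in_def by blast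
  have "t = t * (x * r + y * s)" using assms(6) by simp
  also have "\<dots> = r * (x * t + y * d)" using d(2) by (simp add: algebra_simps)
  finally show ?thesis unfolding dvd_in_def using assms d add mult by blast
qed

lemma exists_divisor_with_same_norm:
  assumes K: "subfield_of_complex K" "class_number_one K" "cnj ` K \<subseteq> K"
    and \<alpha>: "\<alpha> \<in> ring_of_integers K" and \<beta>: "\<beta> \<in> ring_of_integers K"
    and norm_dvd: "dvd_in (ring_of_integers K) (\<alpha> * cnj \<alpha>) (\<beta> * cnj \<beta>)"
  shows "\<exists>\<alpha>1 \<in> ring_of_integers K. dvd_in (ring_of_integers K) \<alpha>1 \<beta> \<and> \<alpha>1 * cnj \<alpha>1 = \<alpha> * cnj \<alpha>"
proof (cases "\<alpha> = 0")
  case True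
  with norm_dvd have "\<beta> = 0" unfolding dvd_in_def by simp
  with True show ?thesis using ring_of_integers_0[OF K(1)] unfolding dvd_in_def by auto
next
  case False
  let ?R = "ring_of_integers K"
  note add = ring_of_integers_add[OF K(1)] and mult = ring_of_integers_mult[OF K(1)]
    and cnj = ring_of_integers_cnj[OF K(3)]
  obtain g x y where g: "g \<in> ?R" "x \<in> ?R" "y \<in> ?R" "g = x * \<alpha> + y * \<beta>"
    "dvd_in ?R g \<alpha>" "dvd_in ?R g \<beta>"
    using class_number_one_bezout[OF K(1,2) \<alpha> \<beta>] by blast
  obtain r1 r2 where r: "r1 \<in> ?R" "\<alpha> = g * r1" "r2 \<in> ?R" "\<beta> = g * r2"
    using g(5,6) unfolding dvd_in_def by blast
  have "g \<noteq> 0" using False r by simp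
  have "g * (x * r1 + y * r2) = x * \<alpha> + y * \<beta>" unfolding r(2,4) by (simp add: algebra_simps)
  then have coprime: "x * r1 + y * r2 = 1"
    using g(4) \<open>g \<noteq> 0\<close> by (metis mult_cancel_left mult_1_right)
  obtain c where c: "c \<in> ?R" "\<beta> * cnj \<beta> = \<alpha> * cnj \<alpha> * c"
    using norm_dvd unfolding dvd_in_def by blast
  have "(g * cnj g) * (r2 * cnj r2) = (g * cnj g) * (r1 * (cnj r1 * c))"
    using c(2) r by (simp add: algebra_simps)
  then have "r2 * cnj r2 = r1 * (cnj r1 * c)" using \<open>g \<noteq> 0\<close> by simp
  then have "dvd_in ?R r1 (r2 * cnj r2)" unfolding dvd_in_def using r c cnj mult by blast
  then obtain \<delta> where \<delta>: "\<delta> \<in> ?R" "cnj r2 = r1 * \<delta>"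
    using dvd_in_of_bezout[OF add mult g(2,3) cnj[OF r(3)] coprime] unfolding dvd_in_def by blast
  show ?thesis
  proof (rule bexI[of _ "g * cnj r1"])
    have "\<beta> = g * cnj r1 * cnj \<delta>" using r(4) arg_cong[OF \<delta>(2), of cnj] by simp
    then show "dvd_in ?R (g * cnj r1) \<beta> \<and> g * cnj r1 * cnj (g * cnj r1) = \<alpha> * cnj \<alpha>"
      unfolding dvd_in_def using \<delta>(1) cnj r(2) by (auto simp: algebra_simps)
    show "g * cnj r1 \<in> ?R" using g r cnj mult by blast
  qed
qed

theorem mainTheorem3:
  fixes K :: "complex set" and a b \<alpha> \<beta> :: complex
  assumes "number_field K"
    and "class_number_one K"
    and "cnj ` K \<subseteq> K"
    and "a \<in> ring_of_integers K \<inter> \<real>" and "b \<in> ring_of_integers K \<inter> \<real>"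
    and "dvd_in (ring_of_integers K \<inter> \<real>) a b"
    and "\<alpha> \<in> ring_of_integers K" and "\<beta> \<in> ring_of_integers K"
    and "a = \<alpha> * cnj \<alpha>" and "b = \<beta> * cnj \<beta>"
  shows "\<exists>\<alpha>1 \<in> ring_of_integers K. dvd_in (ring_of_integers K) \<alpha>1 \<beta> \<and>
           \<alpha>1 * cnj \<alpha>1 = \<alpha> * cnj \<alpha> \<and>
           \<beta> / \<alpha>1 \<in> ring_of_integers K \<and> b / a = (\<beta> / \<alpha>1) * cnj (\<beta> / \<alpha>1)"
proof -
  have K: "subfield_of_complex K" using assms(1) unfolding number_field_def by blast
  obtain c where c: "c \<in> ring_of_integers K" "b = a * c" using assms(6) unfolding dvd_in_def by blast
  then have "\<beta> * cnj \<beta> = \<alpha> * cnj \<alpha> * c" using assms(9,10) by simp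
  with c(1) have "dvd_in (ring_of_integers K) (\<alpha> * cnj \<alpha>) (\<beta> * cnj \<beta>)"
    unfolding dvd_in_def by blast
  then obtain \<alpha>1 \<delta> where \<alpha>1: "\<alpha>1 \<in> ring_of_integers K" "\<alpha>1 * cnj \<alpha>1 = \<alpha> * cnj \<alpha>"
    and \<delta>: "\<delta> \<in> ring_of_integers K" "\<beta> = \<alpha>1 * \<delta>"
    using exists_divisor_with_same_norm[OF K assms(2,3,7,8)] unfolding dvd_in_def by blast
  have quotient: "\<beta> / \<alpha>1 \<in> ring_of_integers K"
    using \<delta> ring_of_integers_0[OF K] by (cases "\<alpha>1 = 0") auto
  have "b / a = (\<beta> * cnj \<beta>) / (\<alpha>1 * cnj \<alpha>1)" using assms(9,10) \<alpha>1(2) by simp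
  also have "\<dots> = (\<beta> / \<alpha>1) * cnj (\<beta> / \<alpha>1)" by (simp add: field_simps)
  finally show ?thesis using \<alpha>1 \<delta> quotient unfolding dvd_in_def by blast
qed

end
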